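(* Let $R$ be a ring and let $m$ and $n$ be positive integers. (1) A proper ideal $I$ of $R$ is weakly $n$-absorbing if and only if for every integer $m>n$ and all $x_1,\dots,x_m\in R$ with $0\neq x_1\cdots x_m\in I$, there are $n$ of the $x_i$'s whose product is in $I$. (2) If $I$ is a weakly $n$-absorbing ideal of $R$, then $I$ is a weakly $m$-absorbing ideal of $R$ for all $m\geq n$. (3) If $k\geq1$ and, for each $1\leq i\leq k$, $I_i$ is a weakly $n_i$-absorbing ideal of $R$ (with $n_i$ positive integers), then $I_1\cap\cdots\cap I_k$ is a weakly $n$-absorbing ideal of $R$ for $n=n_1+\cdots+n_k$. In particular, if $P_1,\dots,P_n$ are weakly prime ideals of $R$, then $P_1\cap\cdots\cap P_n$ is a weakly $n$-absorbing ideal of $R$. (4) If $P_1,\dots,P_n$ are weakly prime ideals of $R$ that are pairwise comaximal, then $P_1\cdots P_n$ is a weakly $n$-absorbing ideal of $R$.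
   Context: All rings are commutative with $1\neq0$. A proper ideal $I$ of $R$ is weakly $n$-absorbing if whenever $0\neq a_1\cdots a_{n+1}\in I$ with $a_1,\dots,a_{n+1}\in R$, there are $n$ of the $a_i$'s whose product is in $I$. A proper ideal $P$ is weakly prime if whenever $a,b\in R$ and $0\neq ab\in P$, then $a\in P$ or $b\in P$. *)

theory Defs
  imports Main
begin

definition is_ideal :: "'a::comm_ring_1 set \<Rightarrow> bool" where
  "is_ideal I \<longleftrightarrow> 0 \<in> I \<and> (\<forall>a\<in>I. \<forall>b\<in>I. a + b \<in> I) \<and> (\<forall>a\<in>I. - a \<in> I)
     \<and> (\<forall>r a. a \<in> I \<longrightarrow> r * a \<in> I)"

definition proper_ideal :: "'a::comm_ring_1 set \<Rightarrow> bool" where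
  "proper_ideal I \<longleftrightarrow> is_ideal I \<and> I \<noteq> UNIV"

definition weakly_n_absorbing :: "nat \<Rightarrow> 'a::comm_ring_1 set \<Rightarrow> bool" where
  "weakly_n_absorbing n I \<longleftrightarrow> proper_ideal I \<and>
     (\<forall>a :: nat \<Rightarrow> 'a. (\<Prod>i<Suc n. a i) \<noteq> 0 \<and> (\<Prod>i<Suc n. a i) \<in> I \<longrightarrow>
        (\<exists>J \<subseteq> {..<Suc n}. card J = n \<and> (\<Prod>i\<in>J. a i) \<in> I))"

definition weakly_prime :: "'a::comm_ring_1 set \<Rightarrow> bool" where
  "weakly_prime P \<longleftrightarrow> proper_ideal P \<and>
     (\<forall>a b. a * b \<noteq> 0 \<and> a * b \<in> P \<longrightarrow> a \<in> P \<or> b \<in> P)"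

definition ideal_gen :: "'a::comm_ring_1 set \<Rightarrow> 'a set" where
  "ideal_gen S = \<Inter>{J. is_ideal J \<and> S \<subseteq> J}"

definition ideal_sum :: "'a::comm_ring_1 set \<Rightarrow> 'a set \<Rightarrow> 'a set" where
  "ideal_sum A B = {a + b | a b. a \<in> A \<and> b \<in> B}"

definition ideal_prod :: "nat \<Rightarrow> (nat \<Rightarrow> 'a::comm_ring_1 set) \<Rightarrow> 'a set" where
  "ideal_prod n P = ideal_gen {\<Prod>i<n. p i | p. \<forall>i<n. p i \<in> P i}"

end

theory Submission
  imports Defs
begin

text \<open>Merging two factors of a product reduces a product of length \<open>m > n + 1\<close> to one of
  length \<open>m - 1\<close>; whenever the chosen \<open>n\<close> factors contain the merged one, they correspond to
  \<open>n + 1\<close> of the original factors, to which weak \<open>n\<close>-absorption applies once more. This gives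
  absorption for products of any length \<open>m > n\<close>, from which monotonicity in \<open>n\<close> and the
  statement for intersections follow by enlarging index sets. A weakly prime ideal is weakly
  1-absorbing, and a product of pairwise comaximal ideals equals their intersection.\<close>

lemma is_ideal_mult_left: "is_ideal I \<Longrightarrow> a \<in> I \<Longrightarrow> r * a \<in> I"
  unfolding is_ideal_def by blast

lemma is_ideal_add: "is_ideal I \<Longrightarrow> a \<in> I \<Longrightarrow> b \<in> I \<Longrightarrow> a + b \<in> I"
  unfolding is_ideal_def by blast

lemma is_ideal_INT: "(\<And>i. i \<in> A \<Longrightarrow> is_ideal (I i)) \<Longrightarrow> is_ideal (\<Inter>i\<in>A. I i)"
  unfolding is_ideal_def by auto

lemma prod_mem_ideal_superset:
  fixes x :: "'b \<Rightarrow> 'a::comm_ring_1"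
  assumes "is_ideal I" "finite B" "A \<subseteq> B" "(\<Prod>i\<in>A. x i) \<in> I"
  shows "(\<Prod>i\<in>B. x i) \<in> I"
  using is_ideal_mult_left[OF assms(1,4)] prod.subset_diff[OF assms(3,2), of x] by simp

lemma prod_nonzero_subset:
  fixes x :: "'b \<Rightarrow> 'a::comm_ring_1"
  assumes "finite B" "A \<subseteq> B" "(\<Prod>i\<in>B. x i) \<noteq> 0"
  shows "(\<Prod>i\<in>A. x i) \<noteq> 0"
  using prod.subset_diff[OF assms(2,1), of x] assms(3) by auto

lemma prod_merge_factor:
  fixes x :: "'b \<Rightarrow> 'a::comm_monoid_mult"
  assumes "finite S" "a \<in> S" "b \<notin> S"
  shows "(\<Prod>i\<in>S. (x(a := x a * x b)) i) = (\<Prod>i\<in>insert b S. x i)"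
proof -
  have "(\<Prod>i\<in>S-{a}. (x(a := x a * x b)) i) = (\<Prod>i\<in>S-{a}. x i)"
    by (rule prod.cong) auto
  then have "(\<Prod>i\<in>S. (x(a := x a * x b)) i) = x a * x b * (\<Prod>i\<in>S-{a}. x i)"
    using prod.remove[OF assms(1,2), of "x(a := x a * x b)"] by simp
  also have "\<dots> = x b * (\<Prod>i\<in>S. x i)"
    using prod.remove[OF assms(1,2), of x] by (simp add: ac_simps)
  finally show ?thesis using assms by simp
qed

lemma weakly_n_absorbing_proper: "weakly_n_absorbing n I \<Longrightarrow> proper_ideal I"
  unfolding weakly_n_absorbing_def by blast

lemma weakly_n_absorbing_card_Suc:
  fixes I :: "'a::comm_ring_1 set"
  assumes W: "weakly_n_absorbing n I" and K: "finite K" "card K = Suc n"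
    and x: "(\<Prod>i\<in>K. x i) \<noteq> 0" "(\<Prod>i\<in>K. x i) \<in> I"
  shows "\<exists>J \<subseteq> K. card J = n \<and> (\<Prod>i\<in>J. x i) \<in> I"
proof -
  obtain h where h: "bij_betw h {..<Suc n} K"
    using ex_bij_betw_nat_finite[OF K(1)] K(2) by (auto simp: atLeast0LessThan)
  have reindex: "(\<Prod>i<Suc n. x (h i)) = (\<Prod>i\<in>K. x i)"
    using prod.reindex_bij_betw[OF h] .
  have absorb: "\<forall>a. (\<Prod>i<Suc n. a i) \<noteq> 0 \<and> (\<Prod>i<Suc n. a i) \<in> I \<longrightarrow>
      (\<exists>J\<subseteq>{..<Suc n}. card J = n \<and> (\<Prod>i\<in>J. a i) \<in> I)"
    using W unfolding weakly_n_absorbing_def by blast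
  obtain J where J: "J \<subseteq> {..<Suc n}" "card J = n" "(\<Prod>i\<in>J. x (h i)) \<in> I"
    using spec[OF absorb, of "\<lambda>i. x (h i)"] reindex x by auto
  have inj: "inj_on h J"
    using bij_betw_imp_inj_on[OF h] J(1) by (rule inj_on_subset)
  show ?thesis
  proof (intro exI conjI)
    show "h ` J \<subseteq> K" using h J(1) by (auto simp: bij_betw_def)
    show "card (h ` J) = n" using card_image[OF inj] J(2) by simp
    show "(\<Prod>i\<in>h ` J. x i) \<in> I" using prod.reindex[OF inj, of x] J(3) by simp
  qed
qed

lemma weakly_n_absorbing_card_gt:
  fixes I :: "'a::comm_ring_1 set"
  assumes W: "weakly_n_absorbing n I" and K: "finite K" "n < card K"
    and x: "(\<Prod>i\<in>K. x i) \<noteq> 0" "(\<Prod>i\<in>K. x i) \<in> I"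
  shows "\<exists>J \<subseteq> K. card J = n \<and> (\<Prod>i\<in>J. x i) \<in> I"
  using K x
proof (induction "card K" arbitrary: K x rule: less_induct)
  case less
  show ?case
  proof (cases "card K = Suc n")
    case True
    then show ?thesis using weakly_n_absorbing_card_Suc[OF W] less.prems by blast
  next
    case False
    with less.prems have gt: "Suc n < card K" by simp
    then obtain a where a: "a \<in> K" by fastforce
    with gt less.prems(1) have "card (K - {a}) > 0" by simp
    then obtain b where b: "b \<in> K" "b \<noteq> a" by (auto simp: card_gt_0_iff)
    define y where "y = x(a := x a * x b)"
    define K' where "K' = K - {b}"
    have K': "finite K'" "a \<in> K'" "b \<notin> K'" "insert b K' = K" "card K' = card K - 1"
      using less.prems(1) a b by (auto simp: K'_def)
    have "(\<Prod>i\<in>K'. y i) = (\<Prod>i\<in>K. x i)"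
      using prod_merge_factor[OF K'(1-3)] K'(4) by (simp add: y_def)
    then have "(\<Prod>i\<in>K'. y i) \<noteq> 0" "(\<Prod>i\<in>K'. y i) \<in> I"
      using less.prems(3,4) by simp_all
    moreover have "card K' < card K" "n < card K'" using K'(5) gt by simp_all
    ultimately obtain J where J: "J \<subseteq> K'" "card J = n" "(\<Prod>i\<in>J. y i) \<in> I"
      using less.hyps K'(1) by blast
    have fin_J: "finite J" using J(1) K'(1) by (rule finite_subset)
    show ?thesis
    proof (cases "a \<in> J")
      case False
      then have "(\<Prod>i\<in>J. y i) = (\<Prod>i\<in>J. x i)" by (auto simp: y_def intro: prod.cong)
      then show ?thesis using J K'_def by auto
    next
      case True
      have bJ: "b \<notin> J" using J(1) K'(3) by blast
      have L: "insert b J \<subseteq> K" "card (insert b J) = Suc n"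
        using J(1,2) K'(4) fin_J bJ by auto
      have "(\<Prod>i\<in>insert b J. x i) \<in> I"
        using prod_merge_factor[OF fin_J True bJ, of x] J(3) by (simp add: y_def)
      moreover have "(\<Prod>i\<in>insert b J. x i) \<noteq> 0"
        using prod_nonzero_subset[OF less.prems(1) L(1)] less.prems(3) .
      ultimately obtain J' where "J' \<subseteq> insert b J" "card J' = n" "(\<Prod>i\<in>J'. x i) \<in> I"
        using weakly_n_absorbing_card_Suc[OF W _ L(2)] fin_J by blast
      then show ?thesis using L(1) by blast
    qed
  qed
qed

lemma weakly_n_absorbing_iff_card_gt:
  fixes I :: "'a::comm_ring_1 set"
  assumes "proper_ideal I"
  shows "weakly_n_absorbing n I \<longleftrightarrow>
         (\<forall>m > n. \<forall>x :: nat \<Rightarrow> 'a. (\<Prod>i<m. x i) \<noteq> 0 \<and> (\<Prod>i<m. x i) \<in> I \<longrightarrow>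
             (\<exists>J \<subseteq> {..<m}. card J = n \<and> (\<Prod>i\<in>J. x i) \<in> I))"
proof
  assume W: "weakly_n_absorbing n I"
  show "\<forall>m > n. \<forall>x :: nat \<Rightarrow> 'a. (\<Prod>i<m. x i) \<noteq> 0 \<and> (\<Prod>i<m. x i) \<in> I \<longrightarrow>
      (\<exists>J \<subseteq> {..<m}. card J = n \<and> (\<Prod>i\<in>J. x i) \<in> I)"
  proof (intro allI impI)
    fix m and x :: "nat \<Rightarrow> 'a"
    assume "n < m" "(\<Prod>i<m. x i) \<noteq> 0 \<and> (\<Prod>i<m. x i) \<in> I"
    then show "\<exists>J \<subseteq> {..<m}. card J = n \<and> (\<Prod>i\<in>J. x i) \<in> I"
      using weakly_n_absorbing_card_gt[OF W, of "{..<m}" x] by simp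
  qed
next
  assume "\<forall>m > n. \<forall>x :: nat \<Rightarrow> 'a. (\<Prod>i<m. x i) \<noteq> 0 \<and> (\<Prod>i<m. x i) \<in> I \<longrightarrow>
      (\<exists>J \<subseteq> {..<m}. card J = n \<and> (\<Prod>i\<in>J. x i) \<in> I)"
  then show "weakly_n_absorbing n I"
    using assms unfolding weakly_n_absorbing_def by blast
qed

lemma weakly_n_absorbing_mono:
  fixes I :: "'a::comm_ring_1 set"
  assumes W: "weakly_n_absorbing n I" and "n \<le> m"
  shows "weakly_n_absorbing m I"
  unfolding weakly_n_absorbing_def
proof (intro conjI allI impI)
  show "proper_ideal I" using W by (rule weakly_n_absorbing_proper)
  then have "is_ideal I" by (simp add: proper_ideal_def)
  fix x :: "nat \<Rightarrow> 'a"
  assume "(\<Prod>i<Suc m. x i) \<noteq> 0 \<and> (\<Prod>i<Suc m. x i) \<in> I"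
  then obtain J where J: "J \<subseteq> {..<Suc m}" "card J = n" "(\<Prod>i\<in>J. x i) \<in> I"
    using weakly_n_absorbing_card_gt[OF W, of "{..<Suc m}" x] \<open>n \<le> m\<close> by auto
  then obtain J' where J': "J \<subseteq> J'" "J' \<subseteq> {..<Suc m}" "card J' = m"
    using exists_subset_between[of J m "{..<Suc m}"] \<open>n \<le> m\<close> by auto
  then have "(\<Prod>i\<in>J'. x i) \<in> I"
    using prod_mem_ideal_superset[OF \<open>is_ideal I\<close> _ J'(1) J(3)] finite_subset by blast
  with J' show "\<exists>J\<subseteq>{..<Suc m}. card J = m \<and> (\<Prod>i\<in>J. x i) \<in> I" by blast
qed

lemma weakly_n_absorbing_INT:
  fixes I :: "nat \<Rightarrow> 'a::comm_ring_1 set"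
  assumes "1 \<le> k" and W: "\<And>i. i < k \<Longrightarrow> weakly_n_absorbing (ns i) (I i)"
  shows "weakly_n_absorbing (\<Sum>i<k. ns i) (\<Inter>i<k. I i)"
proof -
  define n where "n = (\<Sum>i<k. ns i)"
  have ideals: "is_ideal (I i)" if "i < k" for i
    using weakly_n_absorbing_proper[OF W[OF that]] by (simp add: proper_ideal_def)
  have "is_ideal (\<Inter>i<k. I i)" by (rule is_ideal_INT) (simp add: ideals)
  moreover have "I 0 \<noteq> UNIV"
    using weakly_n_absorbing_proper[OF W[of 0]] \<open>1 \<le> k\<close> by (simp add: proper_ideal_def)
  moreover have "(\<Inter>i<k. I i) \<subseteq> I 0" using \<open>1 \<le> k\<close> by auto
  ultimately have proper: "proper_ideal (\<Inter>i<k. I i)" unfolding proper_ideal_def by blast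
  have "\<exists>J\<subseteq>{..<Suc n}. card J = n \<and> (\<Prod>i\<in>J. x i) \<in> (\<Inter>i<k. I i)"
    if x: "(\<Prod>i<Suc n. x i) \<noteq> 0" "(\<Prod>i<Suc n. x i) \<in> (\<Inter>i<k. I i)" for x :: "nat \<Rightarrow> 'a"
  proof -
    have "\<exists>J\<subseteq>{..<Suc n}. card J = ns i \<and> (\<Prod>j\<in>J. x j) \<in> I i" if "i < k" for i
    proof -
      have "ns i \<le> n" unfolding n_def using that by (intro member_le_sum) auto
      then show ?thesis
        using weakly_n_absorbing_card_gt[OF W[OF that], of "{..<Suc n}" x] x that by simp
    qed
    then obtain Js where Js: "\<And>i. i < k \<Longrightarrow> Js i \<subseteq> {..<Suc n}"
      "\<And>i. i < k \<Longrightarrow> card (Js i) = ns i" "\<And>i. i < k \<Longrightarrow> (\<Prod>j\<in>Js i. x j) \<in> I i"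
      by metis
    have "card (\<Union>i<k. Js i) \<le> (\<Sum>i<k. card (Js i))" by (rule card_UN_le) simp
    also have "\<dots> = n" unfolding n_def using Js(2) by (rule sum.cong[OF refl]) simp
    finally have "card (\<Union>i<k. Js i) \<le> n" .
    moreover have "(\<Union>i<k. Js i) \<subseteq> {..<Suc n}" using Js(1) by blast
    ultimately obtain J where J: "(\<Union>i<k. Js i) \<subseteq> J" "J \<subseteq> {..<Suc n}" "card J = n"
      using exists_subset_between[of "\<Union>i<k. Js i" n "{..<Suc n}"] by auto
    have "finite J" using J(2) by (rule finite_subset) simp
    have "(\<Prod>j\<in>J. x j) \<in> I i" if "i < k" for i
      using prod_mem_ideal_superset[OF ideals[OF that] \<open>finite J\<close> _ Js(3)[OF that]] J(1) that
      by blast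
    with J(2,3) show ?thesis by blast
  qed
  with proper show ?thesis unfolding weakly_n_absorbing_def n_def[symmetric] by blast
qed

lemma weakly_prime_imp_weakly_1_absorbing:
  fixes P :: "'a::comm_ring_1 set"
  assumes "weakly_prime P"
  shows "weakly_n_absorbing 1 P"
  unfolding weakly_n_absorbing_def
proof (intro conjI allI impI)
  show "proper_ideal P" using assms weakly_prime_def by blast
  fix x :: "nat \<Rightarrow> 'a"
  assume "(\<Prod>i<Suc 1. x i) \<noteq> 0 \<and> (\<Prod>i<Suc 1. x i) \<in> P"
  then have "x 0 \<in> P \<or> x 1 \<in> P"
    using assms unfolding weakly_prime_def by (simp add: numeral_2_eq_2)
  then show "\<exists>J\<subseteq>{..<Suc 1}. card J = 1 \<and> (\<Prod>i\<in>J. x i) \<in> P"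
  proof
    assume "x 0 \<in> P"
    then show ?thesis by (intro exI[of _ "{0}"]) auto
  next
    assume "x 1 \<in> P"
    then show ?thesis by (intro exI[of _ "{1}"]) auto
  qed
qed

lemma weakly_n_absorbing_INT_weakly_prime:
  fixes P :: "nat \<Rightarrow> 'a::comm_ring_1 set"
  assumes "0 < n" "\<And>i. i < n \<Longrightarrow> weakly_prime (P i)"
  shows "weakly_n_absorbing n (\<Inter>i<n. P i)"
proof -
  have "weakly_n_absorbing (\<Sum>i<n. 1) (\<Inter>i<n. P i)"
    using assms by (intro weakly_n_absorbing_INT weakly_prime_imp_weakly_1_absorbing) auto
  then show ?thesis by simp
qed

lemma is_ideal_ideal_gen: "is_ideal (ideal_gen S)"
  unfolding ideal_gen_def is_ideal_def by auto

lemma ideal_gen_superset: "S \<subseteq> ideal_gen S"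
  unfolding ideal_gen_def by auto

lemma ideal_gen_least: "is_ideal J \<Longrightarrow> S \<subseteq> J \<Longrightarrow> ideal_gen S \<subseteq> J"
  unfolding ideal_gen_def by auto

lemma is_ideal_ideal_prod: "is_ideal (ideal_prod k P)"
  unfolding ideal_prod_def by (rule is_ideal_ideal_gen)

lemma ideal_prod_0: "ideal_prod 0 P = UNIV"
proof -
  have "1 \<in> ideal_prod 0 P"
    unfolding ideal_prod_def by (rule subsetD[OF ideal_gen_superset]) simp
  then have "r * 1 \<in> ideal_prod 0 P" for r
    using is_ideal_mult_left[OF is_ideal_ideal_prod] by blast
  then show ?thesis by auto
qed

lemma ideal_prod_Suc_mult:
  fixes P :: "nat \<Rightarrow> 'a::comm_ring_1 set"
  assumes "q \<in> ideal_prod k P" "y \<in> P k"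
  shows "q * y \<in> ideal_prod (Suc k) P"
proof -
  define T where "T = {q. \<forall>y\<in>P k. q * y \<in> ideal_prod (Suc k) P}"
  have "is_ideal T"
    using is_ideal_ideal_prod[of "Suc k" P]
    unfolding T_def is_ideal_def by (auto simp: distrib_right mult.assoc)
  moreover have "(\<Prod>i<k. p i) \<in> T" if p: "\<forall>i<k. p i \<in> P i" for p
    unfolding T_def
  proof (intro CollectI ballI)
    fix y assume "y \<in> P k"
    then have "(\<Prod>i<Suc k. (p(k := y)) i) \<in> {\<Prod>i<Suc k. p i | p. \<forall>i<Suc k. p i \<in> P i}"
      using p by (auto simp: less_Suc_eq simp del: prod.lessThan_Suc)
    moreover have "(\<Prod>i<k. (p(k := y)) i) = (\<Prod>i<k. p i)"
      by (rule prod.cong) auto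
    then have "(\<Prod>i<Suc k. (p(k := y)) i) = (\<Prod>i<k. p i) * y"
      by simp
    ultimately show "(\<Prod>i<k. p i) * y \<in> ideal_prod (Suc k) P"
      unfolding ideal_prod_def using ideal_gen_superset by fastforce
  qed
  ultimately have "ideal_prod k P \<subseteq> T"
    unfolding ideal_prod_def by (intro ideal_gen_least) blast+
  then show ?thesis using assms T_def by blast
qed

lemma ideal_prod_subset_factor:
  fixes P :: "nat \<Rightarrow> 'a::comm_ring_1 set"
  assumes "is_ideal (P i)" "i < k"
  shows "ideal_prod k P \<subseteq> P i"
  unfolding ideal_prod_def
proof (rule ideal_gen_least[OF assms(1)], safe)
  fix p assume "\<forall>j<k. p j \<in> P j"
  then show "(\<Prod>j<k. p j) \<in> P i"
    using prod_mem_ideal_superset[OF assms(1), of "{..<k}" "{i}" p] assms(2) by simp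
qed

lemma ideal_prod_comaximal:
  fixes P :: "nat \<Rightarrow> 'a::comm_ring_1 set"
  assumes "is_ideal (P m)" "\<And>i. i < k \<Longrightarrow> ideal_sum (P i) (P m) = UNIV"
  shows "\<exists>q\<in>ideal_prod k P. \<exists>p\<in>P m. q + p = 1"
  using assms(2)
proof (induction k)
  case 0
  have "0 \<in> P m" using assms(1) by (simp add: is_ideal_def)
  then show ?case by (auto simp: ideal_prod_0 intro!: bexI[of _ 0])
next
  case (Suc k)
  then obtain q p where qp: "q \<in> ideal_prod k P" "p \<in> P m" "q + p = 1" by auto
  have "1 \<in> ideal_sum (P k) (P m)" using Suc.prems by simp
  then obtain a b where ab: "a \<in> P k" "b \<in> P m" "a + b = 1" unfolding ideal_sum_def by force
  have "1 = (q + p) * (a + b)" using qp(3) ab(3) by simp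
  then have "q * a + (q * b + (a * p + b * p)) = 1" by (simp add: algebra_simps)
  moreover have "q * b + (a * p + b * p) \<in> P m"
    using assms(1) ab(2) qp(2) by (intro is_ideal_add is_ideal_mult_left)
  ultimately show ?case using ideal_prod_Suc_mult[OF qp(1) ab(1)] by blast
qed

lemma ideal_prod_eq_INT_comaximal:
  fixes P :: "nat \<Rightarrow> 'a::comm_ring_1 set"
  assumes ideals: "\<And>i. i < n \<Longrightarrow> is_ideal (P i)"
    and comax: "\<And>i j. i < n \<Longrightarrow> j < n \<Longrightarrow> i \<noteq> j \<Longrightarrow> ideal_sum (P i) (P j) = UNIV"
    and "k \<le> n"
  shows "ideal_prod k P = (\<Inter>i<k. P i)"
  using \<open>k \<le> n\<close>
proof (induction k)
  case 0
  then show ?case by (simp add: ideal_prod_0)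
next
  case (Suc k)
  show ?case
  proof
    show "ideal_prod (Suc k) P \<subseteq> (\<Inter>i<Suc k. P i)"
    proof (rule INT_greatest)
      fix i assume "i \<in> {..<Suc k}"
      with ideals Suc.prems show "ideal_prod (Suc k) P \<subseteq> P i"
        by (intro ideal_prod_subset_factor) auto
    qed
    show "(\<Inter>i<Suc k. P i) \<subseteq> ideal_prod (Suc k) P"
    proof
      fix x assume x: "x \<in> (\<Inter>i<Suc k. P i)"
      then have x_prod: "x \<in> ideal_prod k P" using Suc by simp
      have "is_ideal (P k)" "\<And>i. i < k \<Longrightarrow> ideal_sum (P i) (P k) = UNIV"
        using ideals comax Suc.prems by simp_all
      then obtain q p where qp: "q \<in> ideal_prod k P" "p \<in> P k" "q + p = 1"
        using ideal_prod_comaximal by blast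
      have "x = x * (q + p)" using qp(3) by simp
      then have "x = q * x + x * p" by (simp add: algebra_simps)
      moreover have "q * x + x * p \<in> ideal_prod (Suc k) P"
        using ideal_prod_Suc_mult[OF qp(1)] ideal_prod_Suc_mult[OF x_prod qp(2)] x
        by (intro is_ideal_add[OF is_ideal_ideal_prod]) simp_all
      ultimately show "x \<in> ideal_prod (Suc k) P" by simp
    qed
  qed
qed

theorem mainTheorem11:
  fixes n :: nat
  assumes n_pos: "n > 0"
  shows
   "(\<forall>I :: 'a::comm_ring_1 set. proper_ideal I \<longrightarrow>
       (weakly_n_absorbing n I \<longleftrightarrow>
         (\<forall>m > n. \<forall>x :: nat \<Rightarrow> 'a. (\<Prod>i<m. x i) \<noteq> 0 \<and> (\<Prod>i<m. x i) \<in> I \<longrightarrow>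
             (\<exists>J \<subseteq> {..<m}. card J = n \<and> (\<Prod>i\<in>J. x i) \<in> I))))
  \<and> (\<forall>I :: 'a set. weakly_n_absorbing n I \<longrightarrow> (\<forall>m \<ge> n. weakly_n_absorbing m I))
  \<and> (\<forall>(k::nat) (I :: nat \<Rightarrow> 'a set) (ns :: nat \<Rightarrow> nat).
       k \<ge> 1 \<and> (\<forall>i<k. ns i > 0 \<and> weakly_n_absorbing (ns i) (I i)) \<longrightarrow>
         weakly_n_absorbing (\<Sum>i<k. ns i) (\<Inter>i<k. I i))
  \<and> (\<forall>P :: nat \<Rightarrow> 'a set. (\<forall>i<n. weakly_prime (P i)) \<longrightarrow>
       weakly_n_absorbing n (\<Inter>i<n. P i))
  \<and> (\<forall>P :: nat \<Rightarrow> 'a set. (\<forall>i<n. weakly_prime (P i)) \<and>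
       (\<forall>i<n. \<forall>j<n. i \<noteq> j \<longrightarrow> ideal_sum (P i) (P j) = UNIV) \<longrightarrow>
       weakly_n_absorbing n (ideal_prod n P))"
proof (intro conjI allI impI)
  fix I :: "'a set"
  assume "proper_ideal I"
  then show "weakly_n_absorbing n I \<longleftrightarrow>
         (\<forall>m > n. \<forall>x :: nat \<Rightarrow> 'a. (\<Prod>i<m. x i) \<noteq> 0 \<and> (\<Prod>i<m. x i) \<in> I \<longrightarrow>
             (\<exists>J \<subseteq> {..<m}. card J = n \<and> (\<Prod>i\<in>J. x i) \<in> I))"
    by (rule weakly_n_absorbing_iff_card_gt)
next
  fix I :: "'a set" and m :: nat
  assume "weakly_n_absorbing n I" "n \<le> m"
  then show "weakly_n_absorbing m I" by (rule weakly_n_absorbing_mono)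
next
  fix k :: nat and I :: "nat \<Rightarrow> 'a set" and ns :: "nat \<Rightarrow> nat"
  assume "1 \<le> k \<and> (\<forall>i<k. 0 < ns i \<and> weakly_n_absorbing (ns i) (I i))"
  then show "weakly_n_absorbing (\<Sum>i<k. ns i) (\<Inter>i<k. I i)"
    using weakly_n_absorbing_INT[of k ns I] by blast
next
  fix P :: "nat \<Rightarrow> 'a set"
  assume "\<forall>i<n. weakly_prime (P i)"
  then show "weakly_n_absorbing n (\<Inter>i<n. P i)"
    using weakly_n_absorbing_INT_weakly_prime[OF n_pos] by blast
next
  fix P :: "nat \<Rightarrow> 'a set"
  assume P: "(\<forall>i<n. weakly_prime (P i)) \<and> (\<forall>i<n. \<forall>j<n. i \<noteq> j \<longrightarrow> ideal_sum (P i) (P j) = UNIV)"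
  then have "ideal_prod n P = (\<Inter>i<n. P i)"
    using ideal_prod_eq_INT_comaximal[of n P n] by (simp add: weakly_prime_def proper_ideal_def)
  with P show "weakly_n_absorbing n (ideal_prod n P)"
    using weakly_n_absorbing_INT_weakly_prime[OF n_pos] by auto
qed

end
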